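(* Let $\mathcal{P}_F$ be a quantitative definite clause specification in $\mathcal{R}(\mathcal{L})$, $\mathcal{L}$ be closed under renaming, $\mathcal{A}$ be a minimal model of $\mathcal{P}_F$, $G$ be a goal of the form $r(\vec{x})\,\&\,\phi$, $\alpha\in[\![\phi]\!]^{\mathcal{A}}_{\mathsf{V}}$ and $\mu(\beta(\vec{x}); r^{\mathcal{A}}) = v$ such that $v>0$ and $\alpha=\beta|_{\mathsf{V}}$. Then there exists a proof tree for $G$ from $\mathcal{P}_F$ with answer constraint $\varphi$ and root value $v$ and $\alpha\in[\![\varphi]\!]^{\mathcal{A}}_{\mathsf{V}}$.
   Context: Setting (quantitative constraint logic programming over the Höhfeld–Smolka CLP scheme). $\mathcal{L}$ is a constraint language with variables $\mathsf{VAR}$, $\mathcal{L}$-constraints, $\mathcal{L}$-interpretations $\mathcal{I}$ with domain $\mathcal{D}$, variable assignments $\mathsf{ASS}$ and solution sets $[\![\phi]\!]^{\mathcal{I}}$; $\mathcal{R}(\mathcal{L})$ extends $\mathcal{L}$ with relation symbols and atoms $r(\vec{x})$. A quantitative definite clause specification $\mathcal{P}_F$ is a finite set of clauses $A \leftarrow_f \phi \,\&\, B_1 \,\&\ldots\&\, B_n$ with $A,B_i$ atoms, $\phi$ an $\mathcal{L}$-constraint, $f\in(0,1]$. An $\mathcal{R}(\mathcal{L})$-interpretation $\mathcal{A}$ extending an $\mathcal{L}$-interpretation $\mathcal{I}$ interprets each $n$-ary relation symbol $r$ by a membership function $\mu(\_\,; r^{\mathcal{A}}):\mathcal{D}^n\to[0,1]$;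 $\mathcal{A}$ is a model of $\mathcal{P}_F$ iff for each $\alpha$ and each clause $r(\vec{x}) \leftarrow_f \phi \,\&\, q_1(\vec{x}_1)\&\ldots\& q_k(\vec{x}_k)$: if $\alpha\in[\![\phi]\!]^{\mathcal{I}}$ then $\mu(\alpha(\vec{x}); r^{\mathcal{A}}) \ge f\times\min\{\mu(\alpha(\vec{x}_j); q_j^{\mathcal{A}})\}$ (with $\min\emptyset=1$). Interpretations extending the same $\mathcal{I}$ are ordered pointwise by their membership functions; a minimal model of $\mathcal{P}_F$ is the least model in this order (it exists and equals the union of the chain $\mathcal{A}_0\subseteq\mathcal{A}_1\subseteq\ldots$ with $\mu(\cdot;r^{\mathcal{A}_0})=0$ and $\mu(\alpha(\vec{x}); r^{\mathcal{A}_{i+1}})=\max\{f\times\min_j \mu(\alpha(\vec{x}_j); q_j^{\mathcal{A}_i})\}$ over clause variants whose constraint $\alpha$ satisfies). $\mathsf{V}$ is the finite set of variables of the query, $\alpha|_{\mathsf{V}}$ the restriction of $\alpha$ to $\mathsf{V}$, and $[\![\phi]\!]^{\mathcal{A}}_{\mathsf{V}}=\{\alpha|_{\mathsf{V}}\mid\alpha\in[\![\phi]\!]^{\mathcal{A}}\}$. $\mathcal{L}$ is closed under renaming if every constraint has a variant under every renaming (bijection on $\mathsf{VAR}$ that is the identity except on finitely many variables). Operational semantics: goal reduction $A\,\&\,G\to F\,\&\,G$ using a variant $A\leftarrow F$ of a clause with $(\mathsf{V}\cup\mathsf{V}(G))\cap\mathsf{V}(F)\subseteq\mathsf{V}(A)$;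 constraint solving $\phi\,\&\,\phi'\,\&\,G\to\phi''\,\&\,G$ with $\phi''$ equivalent to $\phi\,\&\,\phi'$ on $\mathsf{V}\cup\mathsf{V}(G)$. A min/max tree for query $G_1$ has root max-node labeled $G_1$; a max-node's descendants are min-nodes, one per clause $C$ yielding a goal-reduction resolvent $G'$, labeled $C$ and $G'$; a min-node's descendants are max-nodes, one per atom $r(\vec{x})$ of its goal, labeled $r(\vec{x})\,\&\,\phi''$ after constraint solving; terminal max-nodes labeled by satisfiable $\mathcal{L}$-constraints are success nodes (value 1), others failure nodes (value 0); max-node value = maximum of descendant values, min-node value = clause factor $f$ times minimum of descendant values. A proof tree is a subtree containing the root where each max-node keeps one descendant, each min-node keeps all descendants, and all terminal nodes are success nodes whose constraints combine by constraint solving into a satisfiable $\mathcal{L}$-constraint, the answer constraint; the root value is the value of the root. *)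

theory Defs
  imports Complex_Main
begin

text \<open>An interpretation is given by the solution
  sets \<open>sol c\<close> (a set of total variable assignments \<open>'v \<Rightarrow> 'd\<close>);
  \<open>vars c\<close> are the (finitely many) variables of constraint \<open>c\<close>.\<close>

definition constraint_language :: "('c \<Rightarrow> 'v set) \<Rightarrow> ('c \<Rightarrow> ('v \<Rightarrow> 'd) set) \<Rightarrow> bool" where
  "constraint_language vars sol \<longleftrightarrow>
     infinite (UNIV :: 'v set) \<and>
     (\<forall>c. finite (vars c)) \<and>
     (\<forall>c \<alpha> \<beta>. (\<forall>x\<in>vars c. \<alpha> x = \<beta> x) \<longrightarrow> (\<alpha> \<in> sol c \<longleftrightarrow> \<beta> \<in> sol c))"

definition renaming :: "('v \<Rightarrow> 'v) \<Rightarrow> bool" where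
  "renaming \<rho> \<longleftrightarrow> bij \<rho> \<and> finite {x. \<rho> x \<noteq> x}"

definition cvariant :: "('c \<Rightarrow> 'v set) \<Rightarrow> ('c \<Rightarrow> ('v \<Rightarrow> 'd) set) \<Rightarrow> ('v \<Rightarrow> 'v) \<Rightarrow> 'c \<Rightarrow> 'c \<Rightarrow> bool" where
  "cvariant vars sol \<rho> c c' \<longleftrightarrow> vars c' = \<rho> ` vars c \<and> sol c' = {\<alpha>. \<alpha> \<circ> \<rho> \<in> sol c}"

definition closed_under_renaming :: "('c \<Rightarrow> 'v set) \<Rightarrow> ('c \<Rightarrow> ('v \<Rightarrow> 'd) set) \<Rightarrow> bool" where
  "closed_under_renaming vars sol \<longleftrightarrow> (\<forall>c \<rho>. renaming \<rho> \<longrightarrow> (\<exists>c'. cvariant vars sol \<rho> c c'))"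

text \<open>Conjunctions of \<open>L\<close>-constraints (as they occur in goals, written \<open>\<phi> & \<phi>'\<close>) are
  represented by lists of constraints.\<close>
definition cvars :: "('c \<Rightarrow> 'v set) \<Rightarrow> 'c list \<Rightarrow> 'v set" where
  "cvars vars cs = (\<Union>c\<in>set cs. vars c)"

definition csol :: "('c \<Rightarrow> ('v \<Rightarrow> 'd) set) \<Rightarrow> 'c list \<Rightarrow> ('v \<Rightarrow> 'd) set" where
  "csol sol cs = {\<alpha>. \<forall>c\<in>set cs. \<alpha> \<in> sol c}"

definition restr :: "'v set \<Rightarrow> ('v \<Rightarrow> 'd) \<Rightarrow> ('v \<rightharpoonup> 'd)" where
  "restr V \<alpha> = (Some \<circ> \<alpha>) |` V"

definition solV :: "('c \<Rightarrow> ('v \<Rightarrow> 'd) set) \<Rightarrow> 'v set \<Rightarrow> 'c list \<Rightarrow> ('v \<rightharpoonup> 'd) set" where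
  "solV sol V cs = restr V ` csol sol cs"

text \<open>Atoms \<open>r(x\<^sub>1,\<dots>,x\<^sub>n)\<close> (pairwise distinct variables) and quantitative clauses
  \<open>r(x) \<leftarrow>\<^sub>f \<phi> & B\<^sub>1 & \<dots> & B\<^sub>k\<close>, represented as (head, factor, constraint, body atoms).\<close>
type_synonym ('r,'v) atom = "'r \<times> 'v list"
type_synonym ('r,'v,'c) qclause = "('r,'v) atom \<times> real \<times> 'c \<times> ('r,'v) atom list"

definition atom_wf :: "('r,'v) atom \<Rightarrow> bool" where
  "atom_wf A \<longleftrightarrow> distinct (snd A)"

definition avars :: "('r,'v) atom \<Rightarrow> 'v set" where
  "avars A = set (snd A)"

definition qspec :: "('r,'v,'c) qclause set \<Rightarrow> bool" where
  "qspec P \<longleftrightarrow> finite P \<and>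
     (\<forall>(A, f, c, B) \<in> P. atom_wf A \<and> 0 < f \<and> f \<le> 1 \<and> (\<forall>Bj\<in>set B. atom_wf Bj))"

definition minl :: "real list \<Rightarrow> real" where
  "minl xs = (if xs = [] then 1 else Min (set xs))"

definition is_qmodel :: "('c \<Rightarrow> ('v \<Rightarrow> 'd) set) \<Rightarrow> ('r,'v,'c) qclause set \<Rightarrow> ('r \<Rightarrow> 'd list \<Rightarrow> real) \<Rightarrow> bool" where
  "is_qmodel sol P \<mu> \<longleftrightarrow>
     (\<forall>r ds. 0 \<le> \<mu> r ds \<and> \<mu> r ds \<le> 1) \<and>
     (\<forall>((r, xs), f, c, B) \<in> P. \<forall>\<alpha>. \<alpha> \<in> sol c \<longrightarrow>
        \<mu> r (map \<alpha> xs) \<ge> f * minl (map (\<lambda>(q, ys). \<mu> q (map \<alpha> ys)) B))"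

definition minimal_qmodel :: "('c \<Rightarrow> ('v \<Rightarrow> 'd) set) \<Rightarrow> ('r,'v,'c) qclause set \<Rightarrow> ('r \<Rightarrow> 'd list \<Rightarrow> real) \<Rightarrow> bool" where
  "minimal_qmodel sol P \<mu> \<longleftrightarrow> is_qmodel sol P \<mu> \<and>
     (\<forall>\<mu>'. is_qmodel sol P \<mu>' \<longrightarrow> (\<forall>r ds. \<mu> r ds \<le> \<mu>' r ds))"

text \<open>Proof trees.  \<open>ptree vars sol P V A \<phi> leaves val\<close>: there is a proof tree (subtree of the
  min/max tree) whose root is the max-node labelled \<open>A & \<phi>\<close>, where \<open>V\<close> are the variables of
  the original query; \<open>leaves\<close> is the conjunction of the constraints of its (success)
  terminal nodes and \<open>val\<close> its root value.  The max-node keeps one min-node descendant,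
  given by goal reduction with a variant \<open>A \<leftarrow> \<phi>' & B\<^sub>1' & ... & B\<^sub>k'\<close> of a clause,
  subject to \<open>(V \<union> V(\<phi>)) \<inter> V(F) \<subseteq> V(A)\<close>; the min-node keeps all its descendants: one max-node
  \<open>B\<^sub>j' & \<phi>\<^sub>j\<close> per body atom, where \<open>\<phi>\<^sub>j\<close> results from constraint solving, i.e. is equivalent to
  \<open>\<phi>' & \<phi>\<close> on \<open>V \<union> V(B\<^sub>j')\<close>; if \<open>k = 0\<close> the single descendant is the terminal max-node labelled
  by the constraint \<open>\<psi>\<close> obtained by constraint solving, which must be satisfiable (success node,
  value 1).\<close>
inductive ptree :: "('c \<Rightarrow> 'v set) \<Rightarrow> ('c \<Rightarrow> ('v \<Rightarrow> 'd) set) \<Rightarrow> ('r,'v,'c) qclause set \<Rightarrow> 'v set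
                    \<Rightarrow> ('r,'v) atom \<Rightarrow> 'c list \<Rightarrow> 'c list \<Rightarrow> real \<Rightarrow> bool"
  for vars sol P V where
  unit: "\<lbrakk> ((r, ys), f, c, []) \<in> P; renaming \<rho>; map \<rho> ys = xs; cvariant vars sol \<rho> c c';
          (V \<union> cvars vars \<phi>) \<inter> vars c' \<subseteq> set xs;
          solV sol V \<psi> = solV sol V (c' # \<phi>); csol sol \<psi> \<noteq> {} \<rbrakk>
         \<Longrightarrow> ptree vars sol P V (r, xs) \<phi> \<psi> (f * 1)"
| step: "\<lbrakk> ((r, ys), f, c, B) \<in> P; B \<noteq> []; renaming \<rho>; map \<rho> ys = xs; cvariant vars sol \<rho> c c';
          B' = map (\<lambda>(q, zs). (q, map \<rho> zs)) B;
          (V \<union> cvars vars \<phi>) \<inter> (vars c' \<union> (\<Union>Bj\<in>set B'. avars Bj)) \<subseteq> set xs;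
          length \<phi>s = length B'; length leaves = length B'; length vals = length B';
          \<forall>j < length B'. solV sol (V \<union> avars (B' ! j)) (\<phi>s ! j)
                             = solV sol (V \<union> avars (B' ! j)) (c' # \<phi>);
          \<forall>j < length B'. ptree vars sol P V (B' ! j) (\<phi>s ! j) (leaves ! j) (vals ! j) \<rbrakk>
         \<Longrightarrow> ptree vars sol P V (r, xs) \<phi> (concat leaves) (f * minl vals)"

text \<open>A proof tree for the query \<open>r(x) & \<phi>\<close> with answer constraint \<open>\<psi>\<close> (the satisfiable
  constraint obtained by combining the terminal constraints by constraint solving, i.e.
  equivalent to their conjunction on the query variables \<open>V\<close>) and root value \<open>v\<close>.\<close>
definition has_proof_tree :: "('c \<Rightarrow> 'v set) \<Rightarrow> ('c \<Rightarrow> ('v \<Rightarrow> 'd) set) \<Rightarrow> ('r,'v,'c) qclause set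
                    \<Rightarrow> ('r,'v) atom \<Rightarrow> 'c \<Rightarrow> 'c list \<Rightarrow> real \<Rightarrow> bool" where
  "has_proof_tree vars sol P A \<phi> \<psi> v \<longleftrightarrow>
     (let V = avars A \<union> vars \<phi> in
      \<exists>leaves. ptree vars sol P V A [\<phi>] leaves v \<and>
               solV sol V \<psi> = solV sol V leaves \<and> csol sol \<psi> \<noteq> {})"

end

theory Submission
  imports Defs "HOL-Combinatorics.Permutations"
begin

text \<open>A positive degree \<open>\<mu> r ds\<close> of the minimal model is attained by a ground proof tree.
  The values of ground proof trees are products of clause factors, and above any positive bound
  there are only finitely many such products; hence every ground atom with a ground proof tree has
  a best one, the best values form a model, and minimality squeezes \<open>\<mu>\<close> between this model and
  the ground values, which no model can undercut.  A ground proof tree is then lifted to a proof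
  tree for \<open>r(x) & \<phi>\<close>: every clause used is renamed apart from the variables in use, and the
  assignment solving \<open>\<phi>\<close> is extended to the fresh variables by the ground instance.\<close>

lemma minl_le: "x \<in> set xs \<Longrightarrow> minl xs \<le> x"
  by (auto simp: minl_def)

lemma minl_in: "xs \<noteq> [] \<Longrightarrow> minl xs \<in> set xs"
  by (simp add: minl_def)

lemma minl_bounds: "\<forall>x\<in>set xs. 0 < x \<and> x \<le> 1 \<Longrightarrow> 0 < minl xs \<and> minl xs \<le> 1"
  by (cases "xs = []") (auto simp: minl_def)

lemma minl_mono:
  assumes "length xs = length ys" "\<forall>i<length xs. xs ! i \<le> ys ! i"
  shows "minl xs \<le> minl ys"
proof (cases "ys = []")
  case True
  then show ?thesis using assms(1) by (simp add: minl_def)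
next
  case False
  then obtain k where k: "k < length ys" "minl ys = ys ! k"
    using minl_in by (metis in_set_conv_nth)
  then have "minl xs \<le> xs ! k" using assms(1) by (simp add: minl_le)
  also have "\<dots> \<le> minl ys" using k assms by simp
  finally show ?thesis .
qed

lemma finite_prod_lists_ge:
  fixes F :: "real set"
  assumes "finite F" "\<forall>f\<in>F. 0 \<le> f \<and> f < 1" "0 < e"
  shows "finite {prod_list l |l. set l \<subseteq> F \<and> e \<le> prod_list l}"
proof -
  define m where "m = Max (insert 0 F)"
  have m: "0 \<le> m" "m < 1" "\<forall>f\<in>F. f \<le> m" using assms(1,2) by (auto simp: m_def)
  obtain K where K: "m ^ K < e" using real_arch_pow_inv[OF assms(3) m(2)] by blast
  have "length l \<le> K" if l: "set l \<subseteq> F" "e \<le> prod_list l" for l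
  proof (rule ccontr)
    assume "\<not> length l \<le> K"
    have "prod_list l \<le> m ^ length l"
      using l(1) assms(2) m(1,3) by (induction l) (auto intro!: mult_mono prod_list_nonneg)
    also have "\<dots> \<le> m ^ K" using \<open>\<not> length l \<le> K\<close> m(1,2) by (intro power_decreasing) auto
    finally show False using K l(2) by simp
  qed
  then have "{prod_list l |l. set l \<subseteq> F \<and> e \<le> prod_list l}
              \<subseteq> prod_list ` {l. set l \<subseteq> F \<and> length l \<le> K}"
    by blast
  then show ?thesis using finite_lists_length_le[OF assms(1)] finite_subset by blast
qed

inductive ground_ptree :: "('c \<Rightarrow> ('v \<Rightarrow> 'd) set) \<Rightarrow> ('r,'v,'c) qclause set
                           \<Rightarrow> 'r \<Rightarrow> 'd list \<Rightarrow> real \<Rightarrow> bool"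
  for sol P where
  clause: "\<lbrakk> ((r, ys), f, c, B) \<in> P; \<alpha> \<in> sol c; map \<alpha> ys = ds; length vals = length B;
             \<forall>j<length B. ground_ptree sol P (fst (B ! j)) (map \<alpha> (snd (B ! j))) (vals ! j) \<rbrakk>
           \<Longrightarrow> ground_ptree sol P r ds (f * minl vals)"

lemma ground_ptree_value_bounds:
  assumes "qspec P" "ground_ptree sol P r ds v"
  shows "0 < v \<and> v \<le> 1"
  using assms(2)
proof induction
  case (clause r ys f c B \<alpha> ds vals)
  have "0 < f" "f \<le> 1" using clause.hyps(1) assms(1) unfolding qspec_def by auto
  moreover have "0 < minl vals \<and> minl vals \<le> 1"
    using clause.IH clause.hyps(4) by (intro minl_bounds) (auto simp: in_set_conv_nth)
  ultimately show ?case by (simp add: mult_le_one)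
qed

lemma ground_ptree_le_qmodel:
  assumes "qspec P" "is_qmodel sol P \<mu>" "ground_ptree sol P r ds v"
  shows "v \<le> \<mu> r ds"
  using assms(3)
proof induction
  case (clause r ys f c B \<alpha> ds vals)
  have "0 \<le> f" using clause.hyps(1) assms(1) unfolding qspec_def by fastforce
  moreover have "minl vals \<le> minl (map (\<lambda>(q, zs). \<mu> q (map \<alpha> zs)) B)"
    using clause.IH clause.hyps(4) by (intro minl_mono) (auto simp: case_prod_beta)
  ultimately have "f * minl vals \<le> f * minl (map (\<lambda>(q, zs). \<mu> q (map \<alpha> zs)) B)"
    by (simp add: mult_left_mono)
  also have "\<dots> \<le> \<mu> r (map \<alpha> ys)"
    using assms(2) clause.hyps(1,2) unfolding is_qmodel_def by fastforce
  finally show ?case using clause.hyps(3) by simp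
qed

text \<open>Factors equal to \<open>1\<close> leave a value unchanged; discarding them is what leaves only
  finitely many ground values above any positive bound.\<close>
definition factors_below_one :: "('r,'v,'c) qclause set \<Rightarrow> real set" where
  "factors_below_one P = {f. f < 1 \<and> (\<exists>A c B. (A, f, c, B) \<in> P)}"

lemma finite_factors_below_one:
  assumes "qspec P"
  shows "finite (factors_below_one P)"
proof -
  have "factors_below_one P \<subseteq> (fst \<circ> snd) ` P"
    unfolding factors_below_one_def by (auto intro: rev_image_eqI)
  then show ?thesis using assms finite_subset unfolding qspec_def by auto
qed

lemma factors_below_one_range:
  "qspec P \<Longrightarrow> \<forall>f\<in>factors_below_one P. 0 \<le> f \<and> f < 1"
  unfolding qspec_def factors_below_one_def by fastforce

lemma ground_ptree_value_prod_factors: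
  assumes "qspec P" "ground_ptree sol P r ds v"
  shows "\<exists>l. set l \<subseteq> factors_below_one P \<and> v = prod_list l"
  using assms(2)
proof induction
  case (clause r ys f c B \<alpha> ds vals)
  have "f \<le> 1" using clause.hyps(1) assms(1) unfolding qspec_def by fastforce
  obtain l where l: "set l \<subseteq> factors_below_one P" "minl vals = prod_list l"
  proof (cases "vals = []")
    case True
    then show ?thesis using that[of "[]"] by (simp add: minl_def)
  next
    case False
    then obtain k where k: "k < length vals" "minl vals = vals ! k"
      using minl_in by (metis in_set_conv_nth)
    then obtain l where "set l \<subseteq> factors_below_one P" "vals ! k = prod_list l"
      using clause.IH clause.hyps(4) by auto
    then show ?thesis using that k(2) by simp
  qed
  show ?case
  proof (cases "f = 1")
    case True
    then show ?thesis using l by auto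
  next
    case False
    then have "f \<in> factors_below_one P"
      using \<open>f \<le> 1\<close> clause.hyps(1) unfolding factors_below_one_def by auto
    then show ?thesis using l by (intro exI[of _ "f # l"]) auto
  qed
qed

lemma ground_ptree_greatest:
  assumes "qspec P" "ground_ptree sol P r ds v"
  shows "\<exists>m. ground_ptree sol P r ds m \<and> (\<forall>v'. ground_ptree sol P r ds v' \<longrightarrow> v' \<le> m)"
proof -
  let ?F = "factors_below_one P"
  have "0 < v" using ground_ptree_value_bounds[OF assms] by simp
  then have "finite {prod_list l |l. set l \<subseteq> ?F \<and> v \<le> prod_list l}"
    by (rule finite_prod_lists_ge[OF finite_factors_below_one[OF assms(1)]
                                      factors_below_one_range[OF assms(1)]])
  moreover have "{v'. ground_ptree sol P r ds v' \<and> v \<le> v'}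
                   \<subseteq> {prod_list l |l. set l \<subseteq> ?F \<and> v \<le> prod_list l}"
    using ground_ptree_value_prod_factors[OF assms(1)] by fastforce
  ultimately have fin: "finite {v'. ground_ptree sol P r ds v' \<and> v \<le> v'}" (is "finite ?T")
    by (rule finite_subset[rotated])
  have "v \<in> ?T" using assms(2) by simp
  then have "Max ?T \<in> ?T" "v \<le> Max ?T" using Max_in[OF fin] Max_ge[OF fin] by blast+
  moreover have "v' \<le> Max ?T" if "ground_ptree sol P r ds v'" for v'
    using that fin \<open>v \<le> Max ?T\<close> by (cases "v \<le> v'") auto
  ultimately show ?thesis by blast
qed

definition best_ground_value :: "('c \<Rightarrow> ('v \<Rightarrow> 'd) set) \<Rightarrow> ('r,'v,'c) qclause set
                                   \<Rightarrow> 'r \<Rightarrow> 'd list \<Rightarrow> real" where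
  "best_ground_value sol P r ds =
     (if \<exists>v. ground_ptree sol P r ds v then GREATEST v. ground_ptree sol P r ds v else 0)"

lemma best_ground_value_eq_0:
  "\<not> (\<exists>v. ground_ptree sol P r ds v) \<Longrightarrow> best_ground_value sol P r ds = 0"
  unfolding best_ground_value_def by (rule if_not_P)

lemma ground_ptree_best_ground_value:
  assumes "qspec P" "ground_ptree sol P r ds v"
  shows "ground_ptree sol P r ds (best_ground_value sol P r ds) \<and> v \<le> best_ground_value sol P r ds"
proof -
  obtain m where m: "ground_ptree sol P r ds m" "\<forall>v'. ground_ptree sol P r ds v' \<longrightarrow> v' \<le> m"
    using ground_ptree_greatest[OF assms] by blast
  then have "best_ground_value sol P r ds = m"
    unfolding best_ground_value_def by (auto intro: Greatest_equality)
  then show ?thesis using m assms(2) by simp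
qed

lemma best_ground_value_bounds:
  assumes "qspec P"
  shows "0 \<le> best_ground_value sol P r ds \<and> best_ground_value sol P r ds \<le> 1"
proof (cases "\<exists>v. ground_ptree sol P r ds v")
  case True
  then show ?thesis
    using ground_ptree_best_ground_value[OF assms] ground_ptree_value_bounds[OF assms] by fastforce
next
  case False
  then show ?thesis by (simp add: best_ground_value_eq_0)
qed

lemma is_qmodel_best_ground_value:
  assumes "qspec P"
  shows "is_qmodel sol P (best_ground_value sol P)"
  unfolding is_qmodel_def
proof (intro conjI allI ballI impI; clarify?)
  fix r ds
  show "0 \<le> best_ground_value sol P r ds" "best_ground_value sol P r ds \<le> 1"
    using best_ground_value_bounds[OF assms] by auto
next
  fix r ys f c B \<alpha>
  assume cl: "((r, ys), f, c, B) \<in> P" and \<alpha>: "\<alpha> \<in> sol c"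
  define bs where "bs = map (\<lambda>(q, zs). best_ground_value sol P q (map \<alpha> zs)) B"
  show "f * minl bs \<le> best_ground_value sol P r (map \<alpha> ys)"
  proof (cases "\<forall>j<length B. \<exists>v. ground_ptree sol P (fst (B ! j)) (map \<alpha> (snd (B ! j))) v")
    case True
    then have "\<forall>j<length B. ground_ptree sol P (fst (B ! j)) (map \<alpha> (snd (B ! j))) (bs ! j)"
      using ground_ptree_best_ground_value[OF assms] by (simp add: bs_def case_prod_beta) blast
    then have "ground_ptree sol P r (map \<alpha> ys) (f * minl bs)"
      using cl \<alpha> by (intro ground_ptree.clause) (auto simp: bs_def)
    then show ?thesis using ground_ptree_best_ground_value[OF assms] by blast
  next
    case False
    then obtain j where j: "j < length B" "bs ! j = 0"
      by (auto simp: bs_def best_ground_value_eq_0 case_prod_beta)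
    then have "minl bs \<le> 0" by (metis bs_def length_map minl_le nth_mem)
    moreover have "0 \<le> f" using cl assms unfolding qspec_def by fastforce
    ultimately have "f * minl bs \<le> 0" by (simp add: mult_nonneg_nonpos)
    then show ?thesis using best_ground_value_bounds[OF assms] by (meson order_trans)
  qed
qed

lemma minimal_qmodel_ground_ptree:
  assumes "qspec P" "minimal_qmodel sol P \<mu>" "0 < \<mu> r ds"
  shows "ground_ptree sol P r ds (\<mu> r ds)"
proof -
  have le: "\<mu> r ds \<le> best_ground_value sol P r ds"
    using assms(2) is_qmodel_best_ground_value[OF assms(1)] unfolding minimal_qmodel_def by blast
  then obtain v where "ground_ptree sol P r ds v"
    using assms(3) unfolding best_ground_value_def by (auto split: if_splits)
  then have best: "ground_ptree sol P r ds (best_ground_value sol P r ds)"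
    using ground_ptree_best_ground_value[OF assms(1)] by blast
  moreover have "best_ground_value sol P r ds \<le> \<mu> r ds"
    using ground_ptree_le_qmodel[OF assms(1) _ best] assms(2) unfolding minimal_qmodel_def by blast
  ultimately show ?thesis using le by simp
qed

lemma renaming_extends_inj_on:
  assumes "finite S" "inj_on h S"
  obtains \<rho> where "renaming \<rho>" "\<forall>x\<in>S. \<rho> x = h x"
proof -
  let ?T = "h ` S"
  have "card (?T - S) = card (S - ?T)"
    using assms card_image[OF assms(2)]
    by (simp add: card_Diff_subset_Int Int_commute)
  then obtain g where g: "bij_betw g (?T - S) (S - ?T)"
    using finite_same_card_bij[of "?T - S" "S - ?T"] assms(1) by auto
  define \<rho> where "\<rho> x = (if x \<in> S then h x else if x \<in> ?T then g x else x)" for x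
  have "bij_betw \<rho> S ?T"
    using assms(2) by (simp add: bij_betw_def inj_on_def \<rho>_def image_def)
  moreover have "bij_betw \<rho> (?T - S) (S - ?T)"
    using g by (rule bij_betw_cong[THEN iffD1, rotated]) (simp add: \<rho>_def)
  ultimately have "bij_betw \<rho> (S \<union> (?T - S)) (?T \<union> (S - ?T))"
    by (rule bij_betw_combine) blast
  then have "bij_betw \<rho> (S \<union> ?T) (S \<union> ?T)"
    by (simp add: Un_commute)
  then have "\<rho> permutes S \<union> ?T"
    by (rule bij_imp_permutes) (simp add: \<rho>_def)
  then have "renaming \<rho>"
    unfolding renaming_def
    using assms(1) permutes_bij finite_subset[of "{x. \<rho> x \<noteq> x}" "S \<union> ?T"]
    by (auto simp: permutes_def)
  then show ?thesis using that by (simp add: \<rho>_def)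
qed

lemma fresh_renaming:
  fixes ys xs :: "'v list"
  assumes "infinite (UNIV :: 'v set)" "finite W" "finite U" "set xs \<subseteq> U"
    and "distinct ys" "distinct xs" "length ys = length xs"
  obtains \<rho> where "renaming \<rho>" "map \<rho> ys = xs" "\<rho> ` (W - set ys) \<inter> U = {}"
proof -
  let ?D = "W - set ys"
  have "infinite (- U)" using assms(1,3) by (simp add: Compl_eq_Diff_UNIV)
  then obtain F where F: "finite F" "card F = card ?D" "F \<subseteq> - U"
    using infinite_arbitrarily_large by blast
  then obtain g where g: "bij_betw g ?D F"
    using finite_same_card_bij[of ?D F] assms(2) by auto
  define h where "h x = (if x \<in> set ys then the (map_of (zip ys xs) x) else g x)" for x
  have hys: "map h ys = xs"
    using assms(5,7) by (auto simp: h_def map_of_zip_nth intro!: nth_equalityI)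
  have "inj_on h (set ys)"
    using hys assms(5-7)
    by (intro eq_card_imp_inj_on) (auto simp: distinct_card simp flip: set_map)
  moreover have "inj_on h ?D"
    using g by (simp add: bij_betw_def h_def inj_on_def)
  moreover have "h ` ?D = F"
    using g by (auto simp: bij_betw_def h_def image_def)
  moreover have "h ` (set ys - ?D) \<inter> h ` (?D - set ys) = {}"
  proof -
    have "h ` set ys = set xs" using hys by (metis set_map)
    then show ?thesis using \<open>h ` ?D = F\<close> F(3) assms(4) by blast
  qed
  ultimately have "inj_on h (set ys \<union> ?D)"
    unfolding inj_on_Un by blast
  then obtain \<rho> where \<rho>: "renaming \<rho>" "\<forall>x\<in>set ys \<union> ?D. \<rho> x = h x"
    using renaming_extends_inj_on[of "set ys \<union> ?D" h] assms(2) by auto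
  have "map \<rho> ys = xs" using \<rho>(2) hys by (metis UnI1 map_eq_conv)
  moreover have "\<rho> ` ?D \<inter> U = {}" using \<rho>(2) \<open>h ` ?D = F\<close> F(3) by auto
  ultimately show ?thesis using that \<rho>(1) by blast
qed

lemma fresh_renaming_assignment:
  fixes ys xs :: "'v list"
  assumes "infinite (UNIV :: 'v set)" "finite W" "finite U" "set xs \<subseteq> U"
    and "distinct ys" "distinct xs" "map \<alpha> ys = map \<gamma> xs"
  obtains \<rho> \<gamma>' where "renaming \<rho>" "map \<rho> ys = xs" "\<rho> ` W \<inter> U \<subseteq> set xs"
    "\<forall>x\<in>U. \<gamma>' x = \<gamma> x" "\<forall>w\<in>W. \<gamma>' (\<rho> w) = \<alpha> w"
proof -
  have "length ys = length xs" using assms(7) map_eq_imp_length_eq by blast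
  then obtain \<rho> where \<rho>: "renaming \<rho>" "map \<rho> ys = xs" "\<rho> ` (W - set ys) \<inter> U = {}"
    using fresh_renaming[OF assms(1-6)] by blast
  have "map \<alpha> ys = map (\<gamma> \<circ> \<rho>) ys" using assms(7) by (simp add: \<rho>(2)[symmetric])
  then have ys: "\<forall>w\<in>set ys. \<gamma> (\<rho> w) = \<alpha> w" by (simp add: map_eq_conv)
  define \<gamma>' where "\<gamma>' z = (if z \<in> U then \<gamma> z else \<alpha> (inv \<rho> z))" for z
  have "set xs = \<rho> ` set ys" using \<rho>(2) by auto
  then have "\<rho> ` W \<inter> U \<subseteq> set xs" using \<rho>(3) by blast
  moreover have "\<gamma>' (\<rho> w) = \<alpha> w" if "w \<in> W" for w
  proof (cases "w \<in> set ys")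
    case True
    then have "\<rho> w \<in> U" using \<rho>(2) assms(4) by auto
    then show ?thesis using True ys by (simp add: \<gamma>'_def)
  next
    case False
    then have "\<rho> w \<notin> U" using that \<rho>(3) by blast
    moreover have "inv \<rho> (\<rho> w) = w" using \<rho>(1) by (simp add: renaming_def bij_def)
    ultimately show ?thesis by (simp add: \<gamma>'_def)
  qed
  moreover have "\<forall>x\<in>U. \<gamma>' x = \<gamma> x" by (simp add: \<gamma>'_def)
  ultimately show ?thesis using that \<rho>(1,2) by blast
qed

lemma sol_agree:
  assumes "constraint_language vars sol" "\<forall>x\<in>vars c. \<gamma> x = \<gamma>' x" "\<gamma> \<in> sol c"
  shows "\<gamma>' \<in> sol c"
  using assms unfolding constraint_language_def by blast

lemma csol_agree:
  assumes "constraint_language vars sol" "\<forall>x\<in>cvars vars cs. \<gamma> x = \<gamma>' x" "\<gamma> \<in> csol sol cs"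
  shows "\<gamma>' \<in> csol sol cs"
proof -
  have "\<gamma>' \<in> sol c" if "c \<in> set cs" for c
    using that assms(2,3) sol_agree[OF assms(1), of c \<gamma> \<gamma>'] unfolding csol_def cvars_def by auto
  then show ?thesis by (simp add: csol_def)
qed

lemma finite_cvars: "constraint_language vars sol \<Longrightarrow> finite (cvars vars cs)"
  by (simp add: constraint_language_def cvars_def)

lemma clause_renamed_apart:
  fixes vars :: "'c \<Rightarrow> 'v set"
  assumes CL: "constraint_language vars sol" and CR: "closed_under_renaming vars sol"
    and Q: "qspec P" and cl: "((q, ys), f, c, B) \<in> P" "\<alpha> \<in> sol c"
    and "atom_wf (q, xs)" "finite U" "V \<union> cvars vars \<phi> \<union> set xs \<subseteq> U"
    and "map \<alpha> ys = map \<gamma> xs" "\<gamma> \<in> csol sol \<phi>"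
  obtains \<rho> c' \<gamma>' U' where "renaming \<rho>" "map \<rho> ys = xs" "cvariant vars sol \<rho> c c'"
    "(V \<union> cvars vars \<phi>) \<inter> (vars c' \<union> (\<Union>Bj\<in>set (map (\<lambda>(p, zs). (p, map \<rho> zs)) B). avars Bj))
       \<subseteq> set xs"
    "finite U'" "U \<subseteq> U'" "cvars vars (c' # \<phi>) \<subseteq> U'" "\<forall>x\<in>U. \<gamma>' x = \<gamma> x" "\<gamma>' \<in> csol sol (c' # \<phi>)"
    "\<forall>(p, zs)\<in>set B. atom_wf (p, map \<rho> zs) \<and> \<rho> ` set zs \<subseteq> U' \<and> map \<gamma>' (map \<rho> zs) = map \<alpha> zs"
proof -
  define W where "W = vars c \<union> set ys \<union> (\<Union>Bj\<in>set B. set (snd Bj))"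
  have "finite W" using CL unfolding W_def constraint_language_def by auto
  have wf: "distinct ys" "\<forall>Bj\<in>set B. atom_wf Bj"
    using cl(1) Q unfolding qspec_def atom_wf_def by fastforce+
  have "infinite (UNIV :: 'v set)" "distinct xs" "set xs \<subseteq> U"
    using CL assms(6,8) by (auto simp: constraint_language_def atom_wf_def)
  then obtain \<rho> \<gamma>' where \<rho>: "renaming \<rho>" "map \<rho> ys = xs" "\<rho> ` W \<inter> U \<subseteq> set xs"
      and \<gamma>': "\<forall>x\<in>U. \<gamma>' x = \<gamma> x" "\<forall>w\<in>W. \<gamma>' (\<rho> w) = \<alpha> w"
    using fresh_renaming_assignment[OF _ \<open>finite W\<close> assms(7) _ wf(1) _ assms(9)] by blast
  obtain c' where c': "cvariant vars sol \<rho> c c'"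
    using CR \<rho>(1) unfolding closed_under_renaming_def by blast
  have "\<forall>x\<in>vars c. \<alpha> x = (\<gamma>' \<circ> \<rho>) x" using \<gamma>'(2) by (simp add: W_def)
  then have "\<gamma>' \<circ> \<rho> \<in> sol c" by (rule sol_agree[OF CL _ cl(2)])
  moreover have "\<forall>x\<in>cvars vars \<phi>. \<gamma> x = \<gamma>' x" using \<gamma>'(1) assms(8) by auto
  then have "\<gamma>' \<in> csol sol \<phi>" by (rule csol_agree[OF CL _ assms(10)])
  ultimately have \<gamma>'_sol: "\<gamma>' \<in> csol sol (c' # \<phi>)" using c' by (simp add: cvariant_def csol_def)
  have vars_c': "vars c' \<union> (\<Union>Bj\<in>set (map (\<lambda>(p, zs). (p, map \<rho> zs)) B). avars Bj) \<subseteq> \<rho> ` W"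
    using c' unfolding cvariant_def avars_def W_def by force
  have "inj \<rho>" using \<rho>(1) by (simp add: renaming_def bij_is_inj)
  have body: "\<forall>(p, zs)\<in>set B. atom_wf (p, map \<rho> zs) \<and> \<rho> ` set zs \<subseteq> U \<union> \<rho> ` W
                \<and> map \<gamma>' (map \<rho> zs) = map \<alpha> zs"
  proof clarify
    fix p zs assume "(p, zs) \<in> set B"
    then have "distinct zs" "set zs \<subseteq> W" using wf(2) by (force simp: W_def atom_wf_def)+
    then show "atom_wf (p, map \<rho> zs) \<and> \<rho> ` set zs \<subseteq> U \<union> \<rho> ` W \<and> map \<gamma>' (map \<rho> zs) = map \<alpha> zs"
      using \<open>inj \<rho>\<close> \<gamma>'(2) by (auto simp: atom_wf_def distinct_map inj_on_subset)
  qed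
  show ?thesis
  proof (rule that[OF \<rho>(1,2) c' _ _ _ _ \<gamma>'(1) \<gamma>'_sol body])
    show "(V \<union> cvars vars \<phi>) \<inter> (vars c' \<union> (\<Union>Bj\<in>set (map (\<lambda>(p, zs). (p, map \<rho> zs)) B). avars Bj))
            \<subseteq> set xs"
      using vars_c' \<rho>(3) assms(8) by blast
    show "finite (U \<union> \<rho> ` W)" using \<open>finite W\<close> assms(7) by simp
    show "cvars vars (c' # \<phi>) \<subseteq> U \<union> \<rho> ` W" using vars_c' assms(8) by (auto simp: cvars_def)
  qed blast
qed

lemma ptree_step_shared_constraint:
  assumes "((r, ys), f, c, B) \<in> P" "B \<noteq> []" "renaming \<rho>" "map \<rho> ys = xs" "cvariant vars sol \<rho> c c'"
    and "B' = map (\<lambda>(q, zs). (q, map \<rho> zs)) B"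
    and "(V \<union> cvars vars \<phi>) \<inter> (vars c' \<union> (\<Union>Bj\<in>set B'. avars Bj)) \<subseteq> set xs"
    and "length leaves = length B" "length vals = length B"
    and "\<forall>j<length B. ptree vars sol P V (B' ! j) (c' # \<phi>) (leaves ! j) (vals ! j)"
  shows "ptree vars sol P V (r, xs) \<phi> (concat leaves) (f * minl vals)"
  by (rule ptree.step[OF assms(1-7), of "replicate (length B) (c' # \<phi>)"])
     (use assms(6,8-10) in auto)

lemma common_solution_concat:
  assumes CL: "constraint_language vars sol" and "finite U"
    and step: "\<And>j U' \<gamma>'. j < n \<Longrightarrow> finite U' \<Longrightarrow> U \<subseteq> U' \<Longrightarrow> \<forall>x\<in>U. \<gamma>' x = \<gamma> x \<Longrightarrow>
                 \<exists>l \<gamma>''. Q j l \<and> (\<forall>x\<in>U'. \<gamma>'' x = \<gamma>' x) \<and> \<gamma>'' \<in> csol sol l"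
  shows "\<exists>ls \<gamma>'. length ls = n \<and> (\<forall>j<n. Q j (ls ! j)) \<and> (\<forall>x\<in>U. \<gamma>' x = \<gamma> x)
                 \<and> \<gamma>' \<in> csol sol (concat ls)"
  using step
proof (induction n)
  case 0
  show ?case by (intro exI[of _ "[]"] exI[of _ \<gamma>]) (simp add: csol_def)
next
  case (Suc n)
  have "\<exists>ls \<gamma>'. length ls = n \<and> (\<forall>j<n. Q j (ls ! j)) \<and> (\<forall>x\<in>U. \<gamma>' x = \<gamma> x)
                 \<and> \<gamma>' \<in> csol sol (concat ls)"
    by (rule Suc.IH, rule Suc.prems) auto
  then obtain ls \<gamma>' where ls: "length ls = n" "\<forall>j<n. Q j (ls ! j)" "\<forall>x\<in>U. \<gamma>' x = \<gamma> x"
      "\<gamma>' \<in> csol sol (concat ls)"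
    by blast
  have "finite (U \<union> cvars vars (concat ls))" using assms(2) finite_cvars[OF CL] by simp
  then obtain l \<gamma>'' where l: "Q n l" "\<forall>x\<in>U \<union> cvars vars (concat ls). \<gamma>'' x = \<gamma>' x"
      "\<gamma>'' \<in> csol sol l"
    using Suc.prems[OF lessI _ Un_upper1 ls(3)] by blast
  have "\<gamma>'' \<in> csol sol (concat ls)"
    using csol_agree[OF CL _ ls(4)] l(2) by simp
  then have "\<gamma>'' \<in> csol sol (concat (ls @ [l]))" using l(3) by (auto simp: csol_def)
  moreover have "\<forall>j<Suc n. Q j ((ls @ [l]) ! j)"
    using ls(1,2) l(1) by (simp add: nth_append less_Suc_eq)
  ultimately show ?case using ls(1,3) l(2) by (intro exI[of _ "ls @ [l]"] exI[of _ \<gamma>'']) auto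
qed

text \<open>\<open>U\<close> is a finite set of variables already in use, on which \<open>\<gamma>\<close> must not change.  Each clause
  is renamed apart from \<open>U\<close>; the sibling subtrees are then built one after another, each
  avoiding the variables of the answer constraints produced before, so that one assignment
  solves all of them.\<close>
lemma ptree_of_ground_ptree:
  assumes CL: "constraint_language vars sol" and CR: "closed_under_renaming vars sol"
    and Q: "qspec P" and "ground_ptree sol P q ds v"
  shows "\<lbrakk> atom_wf (q, xs); finite U; V \<union> cvars vars \<phi> \<union> set xs \<subseteq> U; map \<gamma> xs = ds;
           \<gamma> \<in> csol sol \<phi> \<rbrakk>
         \<Longrightarrow> \<exists>leaves \<gamma>'. ptree vars sol P V (q, xs) \<phi> leaves v \<and> (\<forall>x\<in>U. \<gamma>' x = \<gamma> x)
                          \<and> \<gamma>' \<in> csol sol leaves"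
  using assms(4)
proof (induction arbitrary: xs \<phi> U \<gamma> rule: ground_ptree.induct)
  case (clause q ys f c B \<alpha> ds vals)
  have "map \<alpha> ys = map \<gamma> xs" using clause.hyps(3) clause.prems(4) by simp
  then obtain \<rho> c' \<gamma>\<^sub>1 U\<^sub>1 where \<rho>: "renaming \<rho>" "map \<rho> ys = xs" "cvariant vars sol \<rho> c c'"
      and fresh: "(V \<union> cvars vars \<phi>)
                    \<inter> (vars c' \<union> (\<Union>Bj\<in>set (map (\<lambda>(p, zs). (p, map \<rho> zs)) B). avars Bj))
                  \<subseteq> set xs"
      and U\<^sub>1: "finite U\<^sub>1" "U \<subseteq> U\<^sub>1" "cvars vars (c' # \<phi>) \<subseteq> U\<^sub>1"
      and \<gamma>\<^sub>1: "\<forall>x\<in>U. \<gamma>\<^sub>1 x = \<gamma> x" "\<gamma>\<^sub>1 \<in> csol sol (c' # \<phi>)"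
      and body: "\<forall>(p, zs)\<in>set B. atom_wf (p, map \<rho> zs) \<and> \<rho> ` set zs \<subseteq> U\<^sub>1
                   \<and> map \<gamma>\<^sub>1 (map \<rho> zs) = map \<alpha> zs"
    by (rule clause_renamed_apart[OF CL CR Q clause.hyps(1,2) clause.prems(1-3) _ clause.prems(5)])
  define B' where "B' = map (\<lambda>(p, zs). (p, map \<rho> zs)) B"
  show ?case
  proof (cases "B = []")
    case True
    have "ptree vars sol P V (q, xs) \<phi> (c' # \<phi>) (f * 1)"
      using clause.hyps(1) True \<rho> fresh \<gamma>\<^sub>1(2) by (intro ptree.unit) auto
    then show ?thesis using True clause.hyps(4) \<gamma>\<^sub>1 by (auto simp: minl_def)
  next
    case False
    let ?Q = "\<lambda>j l. ptree vars sol P V (B' ! j) (c' # \<phi>) l (vals ! j)"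
    have "\<exists>l \<gamma>''. ?Q j l \<and> (\<forall>x\<in>U'. \<gamma>'' x = \<gamma>' x) \<and> \<gamma>'' \<in> csol sol l"
      if j: "j < length B" and U': "finite U'" "U\<^sub>1 \<subseteq> U'" "\<forall>x\<in>U\<^sub>1. \<gamma>' x = \<gamma>\<^sub>1 x" for j U' \<gamma>'
    proof -
      obtain p zs where Bj: "B ! j = (p, zs)" by fastforce
      then have "(p, zs) \<in> set B" using j by (metis nth_mem)
      then have "atom_wf (p, map \<rho> zs) \<and> \<rho> ` set zs \<subseteq> U\<^sub>1 \<and> map \<gamma>\<^sub>1 (map \<rho> zs) = map \<alpha> zs"
        using body by blast
      moreover have "\<gamma>' \<in> csol sol (c' # \<phi>)"
        using csol_agree[OF CL _ \<gamma>\<^sub>1(2), of \<gamma>'] U'(3) U\<^sub>1(3) by (metis subsetD)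
      moreover have "B' ! j = (p, map \<rho> zs)" using j Bj by (simp add: B'_def)
      ultimately show ?thesis
        using clause.IH[rule_format, OF j, THEN conjunct2] U' U\<^sub>1 clause.prems(3) Bj
        by (auto simp: subset_iff)
    qed
    then obtain ls \<gamma>' where ls: "length ls = length B" "\<forall>j<length B. ?Q j (ls ! j)"
        "\<forall>x\<in>U\<^sub>1. \<gamma>' x = \<gamma>\<^sub>1 x" "\<gamma>' \<in> csol sol (concat ls)"
      using common_solution_concat[OF CL U\<^sub>1(1), of "length B" \<gamma>\<^sub>1 ?Q] by blast
    have "ptree vars sol P V (q, xs) \<phi> (concat ls) (f * minl vals)"
      using ptree_step_shared_constraint[OF clause.hyps(1) False \<rho> B'_def
              fresh[folded B'_def] ls(1)] clause.hyps(4) ls(2)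
      by blast
    moreover have "\<forall>x\<in>U. \<gamma>' x = \<gamma> x" using ls(3) \<gamma>\<^sub>1(1) U\<^sub>1(2) by (metis subsetD)
    ultimately show ?thesis using ls(4) by blast
  qed
qed

lemma restr_eq_iff: "restr V \<alpha> = restr V \<beta> \<longleftrightarrow> (\<forall>x\<in>V. \<alpha> x = \<beta> x)"
  by (auto simp: restr_def restrict_map_def fun_eq_iff)

theorem theorem3:
  fixes vars :: "'c \<Rightarrow> 'v set"
    and sol :: "'c \<Rightarrow> ('v \<Rightarrow> 'd) set"
    and P :: "('r,'v,'c) qclause set"
    and \<mu> :: "'r \<Rightarrow> 'd list \<Rightarrow> real"
    and r :: 'r and xs :: "'v list" and \<phi> :: 'c
    and \<alpha> :: "'v \<rightharpoonup> 'd" and \<beta> :: "'v \<Rightarrow> 'd" and v :: real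
  assumes "constraint_language vars sol"
    and "closed_under_renaming vars sol"
    and "qspec P"
    and "minimal_qmodel sol P \<mu>"
    and "atom_wf (r, xs)"
    and "\<alpha> \<in> solV sol (set xs \<union> vars \<phi>) [\<phi>]"
    and "\<mu> r (map \<beta> xs) = v"
    and "v > 0"
    and "\<alpha> = restr (set xs \<union> vars \<phi>) \<beta>"
  shows "\<exists>\<psi>. has_proof_tree vars sol P (r, xs) \<phi> \<psi> v \<and> \<alpha> \<in> solV sol (set xs \<union> vars \<phi>) \<psi>"
proof -
  let ?V = "set xs \<union> vars \<phi>"
  obtain \<delta> where \<delta>: "\<delta> \<in> csol sol [\<phi>]" "restr ?V \<delta> = \<alpha>"
    using assms(6) unfolding solV_def by blast
  then have "map \<delta> xs = map \<beta> xs" using assms(9) by (simp add: restr_eq_iff)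
  moreover have "ground_ptree sol P r (map \<beta> xs) v"
    using minimal_qmodel_ground_ptree[OF assms(3,4)] assms(7,8) by blast
  moreover have "finite ?V" using assms(1) by (simp add: constraint_language_def)
  moreover have "?V \<union> cvars vars [\<phi>] \<union> set xs \<subseteq> ?V" by (auto simp: cvars_def)
  ultimately obtain leaves \<gamma> where
    "ptree vars sol P ?V (r, xs) [\<phi>] leaves v" "\<forall>x\<in>?V. \<gamma> x = \<delta> x" "\<gamma> \<in> csol sol leaves"
    using ptree_of_ground_ptree[OF assms(1-3) _ assms(5) _ _ _ \<delta>(1)] by blast
  then have "has_proof_tree vars sol P (r, xs) \<phi> leaves v"
    unfolding has_proof_tree_def Let_def avars_def by (intro exI[of _ leaves]) auto
  moreover have "restr ?V \<gamma> = \<alpha>"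
    using \<open>\<forall>x\<in>?V. \<gamma> x = \<delta> x\<close> by (simp flip: \<delta>(2) add: restr_eq_iff)
  then have "\<alpha> \<in> solV sol ?V leaves"
    using \<open>\<gamma> \<in> csol sol leaves\<close> unfolding solV_def by blast
  ultimately show ?thesis by blast
qed

end
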